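(* Let $K\subseteq\mathbb{R}^{n}$ be compact and let $T\subseteq\mathbb{R}^{n}$ be compact with non-empty interior. Then \[ \lim_{\delta\to0^{+}}N^{*}(K,T+\delta B_{2}^{n})=N^{*}(K,T). \]
   Context: $B_2^n$ is the closed Euclidean unit ball. $\mathcal{B}_{+}^{n}$ is the set of non-negative regular Borel measures on $\mathbb{R}^n$; $(\mu*\mathbbm{1}_S)(x)=\int\mathbbm{1}_S(x-y)\,d\mu(y)$ with $\mathbbm{1}_S$ the indicator of $S$. $N^{*}(K,S)=\inf\{\mu(\mathbb{R}^n):\mu\in\mathcal{B}_+^n,\ \mu*\mathbbm{1}_S\ge\mathbbm{1}_K\}$. *)

theory Defs
  imports "HOL-Analysis.Analysis"
begin

definition regular_borel_measure :: "'a::euclidean_space measure \<Rightarrow> bool" where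
  "regular_borel_measure M \<longleftrightarrow>
     sets M = sets borel \<and>
     (\<forall>A\<in>sets borel.
        emeasure M A = (INF U\<in>{U. open U \<and> A \<subseteq> U}. emeasure M U) \<and>
        emeasure M A = (SUP C\<in>{C. compact C \<and> C \<subseteq> A}. emeasure M C))"

definition frac_cover_number :: "'a::euclidean_space set \<Rightarrow> 'a set \<Rightarrow> ennreal" where
  "frac_cover_number K S =
     (INF M\<in>{M. regular_borel_measure M \<and>
               (\<forall>x. (indicator K x :: ennreal) \<le> (\<integral>\<^sup>+ y. indicator S (x - y) \<partial>M))}.
        emeasure M (space M))"

end

theory Submission
  imports Defs "HOL-Library.Diagonal_Subsequence"
begin

text \<open>Since \<open>T \<subseteq> T + \<delta>B\<close>, the function \<open>\<delta> \<mapsto> N\<^sup>*(K, T + \<delta>B)\<close> is antitone and bounded by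
\<open>N\<^sup>*(K, T)\<close>; the content is the reverse inequality \<open>N\<^sup>*(K, T) \<le> sup\<^sub>\<delta> N\<^sup>*(K, T + \<delta>B)\<close>, a
weak-* compactness argument done by hand.  Take measures \<open>\<mu>\<^sub>k\<close> of mass close to the supremum
covering \<open>K\<close> by \<open>T + B/(k+1)\<close>.  Only their restriction to the compact set \<open>K - (T + B)\<close>
matters; round it to the dyadic grids of mesh \<open>2\<^sup>-\<^sup>m\<close>.  A diagonal subsequence makes the masses
of all grid points at all levels converge.  The limit weights are consistent from one level to
the next, have total mass at most the supremum, and at level \<open>m\<close> still cover \<open>K\<close> by
\<open>T + O(2\<^sup>-\<^sup>m)B\<close>.  Consistent weights are realised by a single measure: nest intervals of the
prescribed lengths along the tree of grid points, send the level-\<open>m\<close> interval of a grid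
point to that point, and pass to the limit \<open>m \<rightarrow> \<infinity>\<close>, which converges uniformly because a
point and its parent are \<open>O(2\<^sup>-\<^sup>m)\<close> apart.  The image of Lebesgue measure under the limit map
covers \<open>K\<close> by \<open>T\<close> itself because \<open>T\<close> is closed.\<close>

section \<open>Closed thickenings\<close>

definition thickening :: "'a::metric_space set \<Rightarrow> real \<Rightarrow> 'a set" where
  "thickening T r = {z. \<exists>t\<in>T. dist z t \<le> r}"

lemma thickening_mono: "a \<le> b \<Longrightarrow> thickening T a \<subseteq> thickening T b"
  unfolding thickening_def by (auto intro: order_trans)

lemma subset_thickening: "0 \<le> r \<Longrightarrow> T \<subseteq> thickening T r"
  unfolding thickening_def by force

lemma thickening_0 [simp]: "thickening T 0 = T"
  unfolding thickening_def by auto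

lemma thickening_dist:
  assumes "z \<in> thickening T a" and "dist z z' \<le> b"
  shows "z' \<in> thickening T (a + b)"
proof -
  obtain t where "t \<in> T" "dist z t \<le> a"
    using assms(1) unfolding thickening_def by auto
  moreover have "dist z' t \<le> dist z z' + dist z t"
    by (rule dist_triangle3)
  ultimately show ?thesis
    using assms(2) unfolding thickening_def by force
qed

lemma thickening_eq_infdist:
  fixes T :: "'a::heine_borel set"
  assumes "closed T" and "T \<noteq> {}"
  shows "thickening T r = {z. infdist z T \<le> r}"
proof safe
  fix z assume "z \<in> thickening T r"
  then show "infdist z T \<le> r"
    unfolding thickening_def using infdist_le2 by blast
next
  fix z assume "infdist z T \<le> r"
  moreover obtain t where "t \<in> T" "infdist z T = dist z t"
    using infdist_attains_inf[OF assms] by blast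
  ultimately show "z \<in> thickening T r"
    unfolding thickening_def by auto
qed

lemma closed_thickening:
  fixes T :: "'a::heine_borel set"
  assumes "closed T"
  shows "closed (thickening T r)"
proof (cases "T = {}")
  case False
  then show ?thesis
    by (simp add: thickening_eq_infdist[OF assms] closed_Collect_le continuous_on_infdist
        continuous_on_id)
qed (simp add: thickening_def)

lemma compact_thickening:
  fixes T :: "'a::heine_borel set"
  assumes "compact T" and "0 < r"
  shows "compact (thickening T r)"
proof (cases "T = {}")
  case False
  then show ?thesis
    using compact_infdist_le[OF False assms]
    by (simp add: thickening_eq_infdist[OF compact_imp_closed[OF assms(1)] False])
qed (simp add: thickening_def)

lemma eventually_not_in_thickening:
  fixes T :: "'a::heine_borel set"
  assumes "closed T" and "z \<notin> thickening T a" and "e \<longlonglongrightarrow> 0"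
  shows "eventually (\<lambda>j. z \<notin> thickening T (a + e j)) sequentially"
proof (cases "T = {}")
  case False
  have "(\<lambda>j. a + e j) \<longlonglongrightarrow> a"
    using tendsto_add[OF tendsto_const assms(3)] by simp
  moreover have "a < infdist z T"
    using assms(2) by (simp add: thickening_eq_infdist[OF assms(1) False])
  ultimately have "eventually (\<lambda>j. a + e j < infdist z T) sequentially"
    by (rule order_tendstoD)
  then show ?thesis
    by eventually_elim (simp add: thickening_eq_infdist[OF assms(1) False])
qed (simp add: thickening_def)

lemma thickening_reflect:
  fixes T :: "'a::real_normed_vector set"
  shows "{y. x - y \<in> thickening T r} = thickening {y. x - y \<in> T} r"
  unfolding thickening_def
proof safe
  fix y t assume "t \<in> T" "dist (x - y) t \<le> r"
  then show "\<exists>t'\<in>{y. x - y \<in> T}. dist y t' \<le> r"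
    by (intro bexI[of _ "x - t"]) (auto simp: dist_norm norm_minus_commute algebra_simps)
next
  fix y t assume "x - t \<in> T" "dist y t \<le> r"
  then show "\<exists>t'\<in>T. dist (x - y) t' \<le> r"
    by (intro bexI[of _ "x - t"]) (auto simp: dist_norm norm_minus_commute algebra_simps)
qed

lemma Minkowski_cball_eq_thickening:
  fixes T :: "'a::real_normed_vector set"
  assumes "0 < \<delta>"
  shows "{t + \<delta> *\<^sub>R b | t b. t \<in> T \<and> b \<in> cball 0 1} = thickening T \<delta>"
proof safe
  fix t b assume "t \<in> T" "b \<in> cball (0::'a) 1"
  then show "t + \<delta> *\<^sub>R b \<in> thickening T \<delta>"
    unfolding thickening_def using assms by (intro CollectI bexI[of _ t]) (auto simp: dist_norm)
next
  fix z assume "z \<in> thickening T \<delta>"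
  then obtain t where t: "t \<in> T" "dist z t \<le> \<delta>"
    unfolding thickening_def by auto
  define b where "b = (1 / \<delta>) *\<^sub>R (z - t)"
  have "z = t + \<delta> *\<^sub>R b"
    using assms by (simp add: b_def)
  moreover have "b \<in> cball 0 1"
    using assms t by (simp add: b_def dist_norm)
  ultimately show "\<exists>t b. z = t + \<delta> *\<^sub>R b \<and> t \<in> T \<and> b \<in> cball 0 1"
    using t by blast
qed

lemma frac_cover_number_antimono:
  assumes "S \<subseteq> S'"
  shows "frac_cover_number K S' \<le> frac_cover_number K S"
  unfolding frac_cover_number_def
proof (rule INF_superset_mono)
  have "(\<integral>\<^sup>+ y. indicator S (x - y) \<partial>M) \<le> (\<integral>\<^sup>+ y. indicator S' (x - y) \<partial>M)" for x and M :: "'a measure"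
    using assms by (intro nn_integral_mono) (auto simp: indicator_def)
  then show "{M. regular_borel_measure M \<and> (\<forall>x. indicator K x \<le> \<integral>\<^sup>+ y. indicator S (x - y) \<partial>M)}
     \<subseteq> {M. regular_borel_measure M \<and> (\<forall>x. indicator K x \<le> \<integral>\<^sup>+ y. indicator S' (x - y) \<partial>M)}"
    by (auto intro: order_trans)
qed simp

lemma frac_cover_number_le:
  assumes "regular_borel_measure M" and "\<And>x. indicator K x \<le> \<integral>\<^sup>+ y. indicator S (x - y) \<partial>M"
  shows "frac_cover_number K S \<le> emeasure M (space M)"
  unfolding frac_cover_number_def using assms by (intro INF_lower) auto

lemma frac_cover_number_lessD:
  assumes "frac_cover_number K S < c"
  shows "\<exists>M. regular_borel_measure M \<and> (\<forall>x. indicator K x \<le> \<integral>\<^sup>+ y. indicator S (x - y) \<partial>M)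
    \<and> emeasure M (space M) < c"
  using assms unfolding frac_cover_number_def INF_less_iff by blast

lemma regular_borel_measureI:
  fixes M :: "'a::euclidean_space measure"
  assumes "sets M = sets borel" and "emeasure M (space M) \<noteq> \<infinity>"
  shows "regular_borel_measure M"
  unfolding regular_borel_measure_def
proof (intro conjI ballI assms(1))
  fix A :: "'a set" assume A: "A \<in> sets borel"
  show "emeasure M A = (INF U\<in>{U. open U \<and> A \<subseteq> U}. emeasure M U)"
    using outer_regular[OF assms A] by (simp add: conj_commute)
  show "emeasure M A = (SUP C\<in>{C. compact C \<and> C \<subseteq> A}. emeasure M C)"
    using inner_regular[OF assms A] by (simp add: conj_commute)
qed

lemma nn_integral_indicator_reflect:
  fixes M :: "'a::euclidean_space measure"
  assumes "sets M = sets borel" and [measurable]: "S \<in> sets borel"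
  shows "(\<integral>\<^sup>+ y. indicator S (x - y) \<partial>M) = emeasure M {y. x - y \<in> S}"
proof -
  have "{y. x - y \<in> S} \<in> sets M"
    unfolding assms(1) by measurable
  moreover have "(\<lambda>y. indicator S (x - y) :: ennreal) = indicator {y. x - y \<in> S}"
    by (auto simp: indicator_def)
  ultimately show ?thesis
    by simp
qed


section \<open>Measures with prescribed masses on a tree of points\<close>

definition stacked_intervals :: "'a set \<Rightarrow> ('a \<Rightarrow> real) \<Rightarrow> real \<Rightarrow> ('a \<Rightarrow> real) \<Rightarrow> bool" where
  "stacked_intervals S v b s \<longleftrightarrow>
     disjoint_family_on (\<lambda>p. {s p..<s p + v p}) S \<and> (\<Union>p\<in>S. {s p..<s p + v p}) = {b..<b + sum v S}"

lemma stacked_intervals_cong: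
  "(\<And>p. p \<in> S \<Longrightarrow> s p = s' p) \<Longrightarrow> stacked_intervals S v b s = stacked_intervals S v b s'"
  unfolding stacked_intervals_def disjoint_family_on_def by (simp cong: SUP_cong)

lemma stacked_intervals_exists:
  assumes "finite S" and "\<And>p. p \<in> S \<Longrightarrow> 0 \<le> v p"
  shows "\<exists>s. stacked_intervals S v b s"
  using assms
proof (induction S rule: finite_induct)
  case empty
  show ?case
    by (simp add: stacked_intervals_def disjoint_family_on_def)
next
  case (insert x F)
  then obtain s where s: "stacked_intervals F v b s"
    by auto
  define s' where "s' = s(x := b + sum v F)"
  have s'_F: "s' p = s p" if "p \<in> F" for p
    using that insert.hyps(2) by (auto simp: s'_def)
  have old: "(\<Union>p\<in>F. {s' p..<s' p + v p}) = {b..<b + sum v F}"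
    using s s'_F unfolding stacked_intervals_def by simp
  have new: "{s' x..<s' x + v x} = {b + sum v F..<b + sum v F + v x}"
    by (simp add: s'_def)
  have "0 \<le> sum v F" "0 \<le> v x"
    using insert by (auto intro: sum_nonneg)
  moreover have "disjoint_family_on (\<lambda>p. {s' p..<s' p + v p}) F"
    using s s'_F unfolding stacked_intervals_def disjoint_family_on_def by simp
  ultimately have "disjoint_family_on (\<lambda>p. {s' p..<s' p + v p}) (insert x F)"
    using old new insert.hyps(2) by (auto simp: disjoint_family_on_insert)
  moreover have "(\<Union>p\<in>insert x F. {s' p..<s' p + v p}) = {b..<b + sum v (insert x F)}"
    using old new \<open>0 \<le> sum v F\<close> \<open>0 \<le> v x\<close> insert.hyps by auto
  ultimately show ?case
    unfolding stacked_intervals_def by blast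
qed

text \<open>Given the intervals of level \<open>m\<close>, each interval is subdivided among the children of its
point; the choice at level \<open>Suc m\<close> is made separately for every parent, and a point of
level \<open>Suc m\<close> reads off its start from the choice made for its own parent.\<close>

primrec tree_start ::
  "(nat \<Rightarrow> 'a set) \<Rightarrow> (nat \<Rightarrow> 'a \<Rightarrow> 'a) \<Rightarrow> (nat \<Rightarrow> 'a \<Rightarrow> real) \<Rightarrow> nat \<Rightarrow> 'a \<Rightarrow> real" where
  "tree_start Q q w 0 = (SOME s. stacked_intervals (Q 0) (w 0) 0 s)"
| "tree_start Q q w (Suc m) = (\<lambda>p.
     (SOME s. stacked_intervals {p'\<in>Q (Suc m). q m p' = q m p} (w (Suc m))
        (tree_start Q q w m (q m p)) s) p)"

locale weight_tree =
  fixes Q :: "nat \<Rightarrow> 'a::euclidean_space set" and q :: "nat \<Rightarrow> 'a \<Rightarrow> 'a"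
    and w :: "nat \<Rightarrow> 'a \<Rightarrow> real" and c :: real
  assumes finite_level: "finite (Q m)"
    and parent_in_level: "p \<in> Q (Suc m) \<Longrightarrow> q m p \<in> Q m"
    and weight_nonneg: "0 \<le> w m p"
    and weight_eq_sum_children: "p \<in> Q m \<Longrightarrow> w m p = sum (w (Suc m)) {p'\<in>Q (Suc m). q m p' = p}"
    and dist_parent_le: "p \<in> Q (Suc m) \<Longrightarrow> dist (q m p) p \<le> c / 2^m"
    and c_nonneg: "0 \<le> c"
begin

abbreviation total where "total \<equiv> sum (w 0) (Q 0)"

abbreviation children where "children m p \<equiv> {p'\<in>Q (Suc m). q m p' = p}"

definition cell :: "nat \<Rightarrow> 'a \<Rightarrow> real set" where
  "cell m p = {tree_start Q q w m p..<tree_start Q q w m p + w m p}"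

definition level_map :: "nat \<Rightarrow> real \<Rightarrow> 'a" where
  "level_map m u = (\<Sum>p\<in>Q m. indicator (cell m p) u *\<^sub>R p)"

lemma stacked_intervals_root: "stacked_intervals (Q 0) (w 0) 0 (tree_start Q q w 0)"
  using stacked_intervals_exists[OF finite_level weight_nonneg]
  by (simp add: someI_ex)

lemma stacked_intervals_children:
  "stacked_intervals (children m p) (w (Suc m)) (tree_start Q q w m p) (tree_start Q q w (Suc m))"
proof -
  define s where "s = (SOME s. stacked_intervals (children m p) (w (Suc m)) (tree_start Q q w m p) s)"
  have "\<exists>s. stacked_intervals (children m p) (w (Suc m)) (tree_start Q q w m p) s"
    by (rule stacked_intervals_exists) (auto simp: finite_level weight_nonneg)
  then have "stacked_intervals (children m p) (w (Suc m)) (tree_start Q q w m p) s"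
    unfolding s_def by (rule someI_ex)
  moreover have "tree_start Q q w (Suc m) p' = s p'" if "p' \<in> children m p" for p'
    using that by (simp add: s_def)
  ultimately show ?thesis
    using stacked_intervals_cong[of "children m p" "tree_start Q q w (Suc m)" s] by simp
qed

lemma Union_cells_children: "p \<in> Q m \<Longrightarrow> (\<Union>p'\<in>children m p. cell (Suc m) p') = cell m p"
  using stacked_intervals_children[of m p] weight_eq_sum_children[of p m]
  unfolding stacked_intervals_def cell_def by simp

lemma cell_subset_parent_cell: "p' \<in> Q (Suc m) \<Longrightarrow> cell (Suc m) p' \<subseteq> cell m (q m p')"
  using Union_cells_children[OF parent_in_level] by blast

lemma cells_partition:
  "disjoint_family_on (cell m) (Q m) \<and> (\<Union>p\<in>Q m. cell m p) = {0..<total}"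
proof (induction m)
  case 0
  then show ?case
    using stacked_intervals_root unfolding stacked_intervals_def cell_def by simp
next
  case (Suc m)
  have "cell (Suc m) p \<inter> cell (Suc m) p' = {}"
    if "p \<in> Q (Suc m)" "p' \<in> Q (Suc m)" "p \<noteq> p'" for p p'
  proof (cases "q m p = q m p'")
    case True
    then show ?thesis
      using stacked_intervals_children[of m "q m p"] that
      unfolding stacked_intervals_def disjoint_family_on_def cell_def by auto
  next
    case False
    then have "cell m (q m p) \<inter> cell m (q m p') = {}"
      using Suc parent_in_level that unfolding disjoint_family_on_def by blast
    then show ?thesis
      using cell_subset_parent_cell that by blast
  qed
  then have "disjoint_family_on (cell (Suc m)) (Q (Suc m))"
    unfolding disjoint_family_on_def by blast
  have "(\<Union>p\<in>Q (Suc m). cell (Suc m) p) = (\<Union>p\<in>Q m. \<Union>p'\<in>children m p. cell (Suc m) p')"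
    using parent_in_level by blast
  also have "\<dots> = (\<Union>p\<in>Q m. cell m p)"
    using Union_cells_children by (intro SUP_cong) auto
  finally show ?case
    using Suc \<open>disjoint_family_on (cell (Suc m)) (Q (Suc m))\<close> by simp
qed

lemma level_map_eq: assumes "p \<in> Q m" "u \<in> cell m p" shows "level_map m u = p"
proof -
  have "u \<notin> cell m p'" if "p' \<in> Q m - {p}" for p'
    using cells_partition[of m] assms that unfolding disjoint_family_on_def by blast
  then have "(\<Sum>p'\<in>Q m - {p}. indicator (cell m p') u *\<^sub>R p') = 0"
    by (intro sum.neutral) auto
  then show ?thesis
    using assms sum.remove[OF finite_level assms(1), of "\<lambda>p'. indicator (cell m p') u *\<^sub>R p'"]
    by (simp add: level_map_def)
qed

lemma level_map_outside: "u \<notin> {0..<total} \<Longrightarrow> level_map m u = 0"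
  using cells_partition[of m] unfolding level_map_def by (intro sum.neutral) auto

lemma level_map_in_level:
  assumes "u \<in> {0..<total}"
  shows "level_map m u \<in> Q m" and "u \<in> cell m (level_map m u)"
proof -
  obtain p where "p \<in> Q m" "u \<in> cell m p"
    using cells_partition[of m] assms by blast
  then show "level_map m u \<in> Q m" "u \<in> cell m (level_map m u)"
    using level_map_eq by auto
qed

lemma level_map_parent:
  assumes "u \<in> {0..<total}"
  shows "level_map m u = q m (level_map (Suc m) u)"
proof (rule level_map_eq)
  show "q m (level_map (Suc m) u) \<in> Q m"
    using parent_in_level level_map_in_level(1)[OF assms] .
  show "u \<in> cell m (q m (level_map (Suc m) u))"
    using cell_subset_parent_cell level_map_in_level[OF assms] by blast
qed

lemma dist_level_map_add:
  assumes "u \<in> {0..<total}"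
  shows "dist (level_map (m + j) u) (level_map m u) \<le> 2 * c / 2^m - 2 * c / 2^(m + j)"
proof (induction j)
  case (Suc j)
  have "dist (level_map (Suc (m + j)) u) (level_map (m + j) u) \<le> c / 2^(m + j)"
    using dist_parent_le[OF level_map_in_level(1)[OF assms, of "Suc (m + j)"]]
      level_map_parent[OF assms, of "m + j", symmetric]
    by (simp add: dist_commute)
  moreover have "c / 2^(m + j) + (2 * c / 2^m - 2 * c / 2^(m + j)) = 2 * c / 2^m - 2 * c / 2^(m + Suc j)"
    by (simp add: field_simps)
  moreover have "dist (level_map (m + Suc j) u) (level_map m u)
      \<le> dist (level_map (Suc (m + j)) u) (level_map (m + j) u) + dist (level_map (m + j) u) (level_map m u)"
    by (simp add: dist_triangle)
  ultimately show ?case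
    using Suc by linarith
qed simp

lemma dist_level_map_le:
  assumes "u \<in> {0..<total}" and "m \<le> j"
  shows "dist (level_map j u) (level_map m u) \<le> 2 * c / 2^m"
proof -
  have "0 \<le> 2 * c / 2^j"
    using c_nonneg by simp
  then show ?thesis
    using dist_level_map_add[OF assms(1), of m "j - m"] assms(2) by simp
qed

lemma convergent_level_map: "convergent (\<lambda>j. level_map j u)"
proof (cases "u \<in> {0..<total}")
  case True
  have "Cauchy (\<lambda>j. level_map j u)"
  proof (rule metric_CauchyI)
    fix e :: real assume "0 < e"
    have "(\<lambda>m. 4 * c / 2^m) \<longlonglongrightarrow> 0"
      by (intro tendsto_divide_0[OF tendsto_const]) (simp add: filterlim_realpow_sequentially_gt1)
    then have "eventually (\<lambda>m. 4 * c / 2^m < e) sequentially"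
      using \<open>0 < e\<close> by (rule order_tendstoD)
    then obtain m where m: "4 * c / 2^m < e"
      by (auto simp: eventually_sequentially)
    have "dist (level_map j u) (level_map n u) < e" if "m \<le> j" "m \<le> n" for j n
    proof -
      have "dist (level_map j u) (level_map n u) \<le> dist (level_map j u) (level_map m u) + dist (level_map n u) (level_map m u)"
        by (rule dist_triangle2)
      also have "\<dots> \<le> 2 * c / 2^m + 2 * c / 2^m"
        using dist_level_map_le[OF True] that by (intro add_mono) auto
      finally show ?thesis
        using m by simp
    qed
    then show "\<exists>M. \<forall>j\<ge>M. \<forall>n\<ge>M. dist (level_map j u) (level_map n u) < e"
      by blast
  qed
  then show ?thesis
    by (simp add: Cauchy_convergent_iff)
next
  case False
  then show ?thesis
    using level_map_outside[OF False] by (simp add: convergent_const)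
qed

definition limit_map :: "real \<Rightarrow> 'a" where
  "limit_map u = lim (\<lambda>j. level_map j u)"

lemma level_map_tendsto: "(\<lambda>j. level_map j u) \<longlonglongrightarrow> limit_map u"
  using convergent_level_map unfolding limit_map_def by (simp add: convergent_LIMSEQ_iff)

lemma dist_limit_map_le:
  assumes "u \<in> {0..<total}"
  shows "dist (limit_map u) (level_map m u) \<le> 2 * c / 2^m"
proof (rule tendsto_upperbound)
  show "(\<lambda>j. dist (level_map j u) (level_map m u)) \<longlonglongrightarrow> dist (limit_map u) (level_map m u)"
    by (intro tendsto_dist level_map_tendsto tendsto_const)
  show "eventually (\<lambda>j. dist (level_map j u) (level_map m u) \<le> 2 * c / 2^m) sequentially"
    using dist_level_map_le[OF assms] by (auto simp: eventually_sequentially)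
qed simp

lemma level_map_measurable [measurable]: "level_map m \<in> borel_measurable borel"
  unfolding level_map_def cell_def by measurable

lemma limit_map_measurable [measurable]: "limit_map \<in> borel_measurable borel"
  by (rule borel_measurable_LIMSEQ_metric[OF level_map_measurable level_map_tendsto])

lemma emeasure_level_map_preimage:
  "emeasure lborel {u\<in>{0..<total}. level_map m u \<in> A} = ennreal (sum (w m) (Q m \<inter> A))"
proof -
  have "{u\<in>{0..<total}. level_map m u \<in> A} = (\<Union>p\<in>Q m \<inter> A. cell m p)"
    using level_map_in_level level_map_eq cells_partition[of m] by blast
  moreover have "emeasure lborel (\<Union>p\<in>Q m \<inter> A. cell m p) = (\<Sum>p\<in>Q m \<inter> A. emeasure lborel (cell m p))"
    using cells_partition[of m]
    by (intro sum_emeasure[symmetric]) (auto simp: cell_def finite_level disjoint_family_on_def)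
  moreover have "(\<Sum>p\<in>Q m \<inter> A. emeasure lborel (cell m p)) = ennreal (sum (w m) (Q m \<inter> A))"
    by (simp add: cell_def weight_nonneg sum_ennreal)
  ultimately show ?thesis
    by simp
qed

definition tree_measure :: "'a measure" where
  "tree_measure = distr (density lborel (indicator {0..<total})) borel limit_map"

lemma sets_tree_measure [simp]: "sets tree_measure = sets borel"
  by (simp add: tree_measure_def)

lemma emeasure_tree_measure:
  assumes [measurable]: "A \<in> sets borel"
  shows "emeasure tree_measure A = emeasure lborel ({0..<total} \<inter> limit_map -` A)"
proof -
  have pre [measurable]: "limit_map -` A \<in> sets borel"
    using measurable_sets[OF limit_map_measurable assms] by simp
  have "emeasure tree_measure A = emeasure (density lborel (indicator {0..<total})) (limit_map -` A)"
    unfolding tree_measure_def by (subst emeasure_distr) auto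
  also have "\<dots> = (\<integral>\<^sup>+ u. indicator {0..<total} u * indicator (limit_map -` A) u \<partial>lborel)"
    by (rule emeasure_density) auto
  also have "\<dots> = (\<integral>\<^sup>+ u. indicator ({0..<total} \<inter> limit_map -` A) u \<partial>lborel)"
    by (simp add: indicator_inter_arith)
  finally show ?thesis
    by simp
qed

lemma emeasure_space_tree_measure: "emeasure tree_measure (space tree_measure) = ennreal total"
  using emeasure_tree_measure[of UNIV] sum_nonneg[of "Q 0" "w 0"] weight_nonneg
  by (simp add: sets_eq_imp_space_eq[OF sets_tree_measure])

lemma le_emeasure_tree_measure:
  assumes "closed F" and a: "\<And>m. a \<le> sum (w m) {p\<in>Q m. p \<in> thickening F (c / 2^m)}"
  shows "ennreal a \<le> emeasure tree_measure F"
proof -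
  define G where "G m = {0..<total} \<inter> limit_map -` thickening F (3 * c / 2^m)" for m
  have [measurable]: "thickening F r \<in> sets borel" for r
    using closed_thickening[OF assms(1)] by simp
  have G_sets: "G m \<in> sets lborel" for m
    unfolding G_def by measurable
  have "decseq G"
    unfolding decseq_def G_def
  proof (intro allI impI)
    fix m n :: nat assume "m \<le> n"
    then have "3 * c / 2^n \<le> 3 * c / 2^m"
      using c_nonneg by (intro divide_left_mono) (auto simp: power_increasing)
    then show "{0..<total} \<inter> limit_map -` thickening F (3 * c / 2^n)
        \<subseteq> {0..<total} \<inter> limit_map -` thickening F (3 * c / 2^m)"
      using thickening_mono by blast
  qed
  have G_finite: "emeasure lborel (G m) \<noteq> \<infinity>" for m
  proof -
    have "emeasure lborel (G m) \<le> emeasure lborel {0..<total}"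
      by (rule emeasure_mono) (auto simp: G_def)
    then show ?thesis
      using sum_nonneg[of "Q 0" "w 0"] weight_nonneg by (auto simp: top_unique)
  qed
  have G_Inter: "(\<Inter>m. G m) = {0..<total} \<inter> limit_map -` F"
  proof (intro equalityI subsetI)
    fix u assume u: "u \<in> (\<Inter>m. G m)"
    have "limit_map u \<in> F"
    proof (rule ccontr)
      assume "limit_map u \<notin> F"
      moreover have "(\<lambda>m. 3 * c / 2^m) \<longlonglongrightarrow> 0"
        by (intro tendsto_divide_0[OF tendsto_const]) (simp add: filterlim_realpow_sequentially_gt1)
      ultimately have "eventually (\<lambda>m. limit_map u \<notin> thickening F (0 + 3 * c / 2^m)) sequentially"
        by (intro eventually_not_in_thickening[OF assms(1)]) simp_all
      then show False
        using u by (auto simp: G_def eventually_sequentially)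
    qed
    then show "u \<in> {0..<total} \<inter> limit_map -` F"
      using u by (auto simp: G_def)
  next
    fix u assume "u \<in> {0..<total} \<inter> limit_map -` F"
    then show "u \<in> (\<Inter>m. G m)"
      using subset_thickening[of "3 * c / 2^_" F] c_nonneg by (auto simp: G_def)
  qed
  have "ennreal a \<le> emeasure lborel (G m)" for m
  proof -
    let ?A = "thickening F (c / 2^m)"
    have "{u\<in>{0..<total}. level_map m u \<in> ?A} \<subseteq> G m"
    proof
      fix u assume u: "u \<in> {u\<in>{0..<total}. level_map m u \<in> ?A}"
      then have "dist (level_map m u) (limit_map u) \<le> 2 * c / 2^m"
        using dist_limit_map_le by (simp add: dist_commute)
      then have "limit_map u \<in> thickening F (c / 2^m + 2 * c / 2^m)"
        using u thickening_dist by blast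
      moreover have "c / 2^m + 2 * c / 2^m = 3 * c / 2^m"
        by (simp add: field_simps)
      ultimately show "u \<in> G m"
        using u by (simp add: G_def)
    qed
    then have "emeasure lborel {u\<in>{0..<total}. level_map m u \<in> ?A} \<le> emeasure lborel (G m)"
      using G_sets by (rule emeasure_mono)
    moreover have "ennreal a \<le> emeasure lborel {u\<in>{0..<total}. level_map m u \<in> ?A}"
      unfolding emeasure_level_map_preimage using a[of m] by (simp add: Int_def ennreal_leI)
    ultimately show ?thesis
      by order
  qed
  then have "ennreal a \<le> (INF m. emeasure lborel (G m))"
    by (rule INF_greatest)
  also have "\<dots> = emeasure lborel (\<Inter>m. G m)"
    using G_sets \<open>decseq G\<close> G_finite by (intro INF_emeasure_decseq) auto
  also have "\<dots> = emeasure tree_measure F"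
    using G_Inter emeasure_tree_measure[of F] assms(1) by simp
  finally show ?thesis .
qed

end

section \<open>Dyadic rounding\<close>

definition dyadic_round :: "nat \<Rightarrow> 'a::euclidean_space \<Rightarrow> 'a" where
  "dyadic_round m y = (\<Sum>i\<in>Basis. (of_int \<lfloor>2^m * (y \<bullet> i)\<rfloor> / 2^m) *\<^sub>R i)"

lemma inner_dyadic_round: "i \<in> Basis \<Longrightarrow> dyadic_round m y \<bullet> i = of_int \<lfloor>2^m * (y \<bullet> i)\<rfloor> / 2^m"
  unfolding dyadic_round_def by (simp add: inner_sum_left inner_Basis if_distrib cong: if_cong)

lemma dyadic_round_dyadic_round_Suc: "dyadic_round m (dyadic_round (Suc m) y) = dyadic_round m y"
  unfolding dyadic_round_def[of m]
proof (intro sum.cong refl)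
  fix i :: 'a assume i: "i \<in> Basis"
  define t where "t = 2 * 2^m * (y \<bullet> i)"
  have "\<lfloor>2^m * (dyadic_round (Suc m) y \<bullet> i)\<rfloor> = \<lfloor>real_of_int \<lfloor>t\<rfloor> / 2\<rfloor>"
    by (simp add: inner_dyadic_round[OF i] t_def)
  also have "\<dots> = \<lfloor>t\<rfloor> div 2"
    using floor_divide_of_int_eq[of "\<lfloor>t\<rfloor>" 2] by simp
  also have "\<dots> = \<lfloor>t / 2\<rfloor>"
    using floor_divide_real_eq_div[of 2 t] by simp
  also have "\<dots> = \<lfloor>2^m * (y \<bullet> i)\<rfloor>"
    by (simp add: t_def)
  finally show "(of_int \<lfloor>2^m * (dyadic_round (Suc m) y \<bullet> i)\<rfloor> / 2^m) *\<^sub>R i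
      = (of_int \<lfloor>2^m * (y \<bullet> i)\<rfloor> / 2^m) *\<^sub>R i"
    by simp
qed

lemma dist_dyadic_round_le: "dist (dyadic_round m y) y \<le> DIM('a) / 2^m"
  for y :: "'a::euclidean_space"
proof -
  have "\<bar>(dyadic_round m y - y) \<bullet> i\<bar> \<le> 1 / 2^m" if i: "i \<in> Basis" for i
  proof -
    have "(dyadic_round m y - y) \<bullet> i = (of_int \<lfloor>2^m * (y \<bullet> i)\<rfloor> - 2^m * (y \<bullet> i)) / 2^m"
      by (simp add: inner_diff_left inner_dyadic_round[OF i] field_simps)
    moreover have "\<bar>of_int \<lfloor>2^m * (y \<bullet> i)\<rfloor> - 2^m * (y \<bullet> i)\<bar> \<le> 1"
      by linarith
    ultimately show ?thesis
      by (simp add: abs_div divide_right_mono)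
  qed
  then have "(\<Sum>i\<in>Basis. \<bar>(dyadic_round m y - y) \<bullet> i\<bar>) \<le> (\<Sum>i\<in>(Basis::'a set). 1 / 2^m)"
    by (rule sum_mono)
  then show ?thesis
    using norm_le_l1[of "dyadic_round m y - y"] by (simp add: dist_norm)
qed

lemma dyadic_round_measurable [measurable]: "dyadic_round m \<in> borel_measurable borel"
  unfolding dyadic_round_def by measurable

lemma finite_image_dyadic_round:
  fixes R :: "'a::euclidean_space set"
  assumes "bounded R"
  shows "finite (dyadic_round m ` R)"
proof -
  obtain B where B: "\<And>y. y \<in> R \<Longrightarrow> norm y \<le> B"
    using assms by (auto simp: bounded_iff)
  define N :: int where "N = \<lceil>2^m * B\<rceil>"
  define g :: "('a \<Rightarrow> int) \<Rightarrow> 'a" where "g f = (\<Sum>i\<in>Basis. (of_int (f i) / 2^m) *\<^sub>R i)" for f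
  have "dyadic_round m y \<in> g ` (Basis \<rightarrow>\<^sub>E {-N..N})" if "y \<in> R" for y
  proof
    show "dyadic_round m y = g (\<lambda>i\<in>Basis. \<lfloor>2^m * (y \<bullet> i)\<rfloor>)"
      unfolding g_def dyadic_round_def by (intro sum.cong refl) simp
    have "\<lfloor>2^m * (y \<bullet> i)\<rfloor> \<in> {-N..N}" if "i \<in> Basis" for i
    proof -
      have "\<bar>2^m * (y \<bullet> i)\<bar> \<le> 2^m * B"
        using Basis_le_norm[OF that, of y] B[OF \<open>y \<in> R\<close>] by (simp add: abs_mult)
      then show ?thesis
        unfolding N_def by (simp, linarith)
    qed
    then show "(\<lambda>i\<in>Basis. \<lfloor>2^m * (y \<bullet> i)\<rfloor>) \<in> Basis \<rightarrow>\<^sub>E {-N..N}"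
      by (simp add: restrict_PiE_iff)
  qed
  then have "dyadic_round m ` R \<subseteq> g ` (Basis \<rightarrow>\<^sub>E {-N..N})"
    by blast
  moreover have "finite (g ` (Basis \<rightarrow>\<^sub>E {-N..N}))"
    by (intro finite_imageI finite_PiE) auto
  ultimately show ?thesis
    by (rule finite_subset)
qed

lemma diagonal_subseq_convergent:
  fixes f :: "nat \<Rightarrow> 'i \<Rightarrow> 'b::heine_borel"
  assumes "countable I" and "\<And>i. i \<in> I \<Longrightarrow> bounded (range (\<lambda>k. f k i))"
  obtains r where "strict_mono r" "\<And>i. i \<in> I \<Longrightarrow> convergent (\<lambda>k. f (r k) i)"
proof (cases "I = {}")
  case True
  then show ?thesis
    using that[of id] by (simp add: strict_mono_id)
next
  case False
  define g where "g = from_nat_into I"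
  have g_in: "g j \<in> I" for j
    using from_nat_into[OF False] by (simp add: g_def)
  interpret subseqs "\<lambda>j s. convergent (\<lambda>k. f (s k) (g j))"
  proof
    fix j and s :: "nat \<Rightarrow> nat"
    have "bounded (range (\<lambda>k. f (s k) (g j)))"
      using assms(2)[OF g_in] by (rule bounded_subset) auto
    then obtain l r where "strict_mono r" "((\<lambda>k. f (s k) (g j)) \<circ> r) \<longlonglongrightarrow> l"
      using bounded_imp_convergent_subsequence by blast
    then show "\<exists>r'. strict_mono r' \<and> convergent (\<lambda>k. f ((s \<circ> r') k) (g j))"
      by (auto simp: convergent_def o_def)
  qed
  have "convergent (\<lambda>k. f (diagseq k) (g j))" for j
  proof -
    have "convergent (\<lambda>k. f ((diagseq \<circ> (+) (Suc j)) k) (g j))"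
      by (rule diagseq_holds) (auto dest: convergent_subseq_convergent simp: o_def)
    then show ?thesis
      using convergent_ignore_initial_segment[of "\<lambda>k. f (diagseq k) (g j)" "Suc j"]
      by (simp add: o_def add.commute)
  qed
  then show ?thesis
    using that[OF subseq_diagseq] from_nat_into_to_nat_on[OF assms(1)] unfolding g_def by metis
qed

section \<open>Limits of near-optimal covers\<close>

locale near_covers =
  fixes K T :: "'a::euclidean_space set" and \<mu> :: "nat \<Rightarrow> 'a measure" and L :: real
  assumes compact_K: "compact K" and compact_T: "compact T"
    and sets_\<mu>: "sets (\<mu> k) = sets borel"
    and mass_\<mu>: "emeasure (\<mu> k) (space (\<mu> k)) \<le> ennreal (L + inverse (Suc k))"
    and covers_\<mu>: "indicator K x \<le> \<integral>\<^sup>+ y. indicator (thickening T (inverse (Suc k))) (x - y) \<partial>\<mu> k"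
    and L_nonneg: "0 \<le> L"
begin

definition region :: "'a set" where
  "region = {x - z | x z. x \<in> K \<and> z \<in> thickening T 1}"

definition grid :: "nat \<Rightarrow> 'a set" where
  "grid m = dyadic_round m ` region"

definition cell_mass :: "nat \<Rightarrow> nat \<Rightarrow> 'a \<Rightarrow> real" where
  "cell_mass k m p = measure (\<mu> k) (region \<inter> dyadic_round m -` {p})"

lemma compact_region: "compact region"
  unfolding region_def
  by (rule compact_differences[OF compact_K compact_thickening[OF compact_T]]) simp

lemma region_borel [measurable]: "region \<in> sets borel"
  using compact_region by (simp add: compact_imp_closed)

lemma in_region: "x \<in> K \<Longrightarrow> x - y \<in> thickening T 1 \<Longrightarrow> y \<in> region"
  unfolding region_def by (intro CollectI exI[of _ x] exI[of _ "x - y"]) simp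

lemma finite_grid: "finite (grid m)"
  unfolding grid_def by (rule finite_image_dyadic_round[OF compact_imp_bounded[OF compact_region]])

lemma dyadic_round_in_grid: "p \<in> grid (Suc m) \<Longrightarrow> dyadic_round m p \<in> grid m"
  unfolding grid_def using dyadic_round_dyadic_round_Suc by (auto simp: image_iff)

lemma emeasure_\<mu>_finite: "emeasure (\<mu> k) A \<noteq> top"
  using emeasure_space[of "\<mu> k" A] mass_\<mu>[of k] by (auto simp: top_unique)

lemma cell_mass_nonneg: "0 \<le> cell_mass k m p"
  by (simp add: cell_mass_def)

lemma cell_mass_le: "cell_mass k m p \<le> L + 1"
proof -
  have "ennreal (cell_mass k m p) \<le> ennreal (L + inverse (Suc k))"
    unfolding cell_mass_def
    using emeasure_eq_ennreal_measure[OF emeasure_\<mu>_finite] emeasure_space mass_\<mu>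
    by (metis order_trans)
  moreover have "0 \<le> L + inverse (Suc k)" "inverse (real (Suc k)) \<le> 1"
    using L_nonneg by (simp_all add: field_simps)
  ultimately show ?thesis
    by (simp del: ennreal_plus)
qed

lemma cell_mass_outside_grid:
  assumes "p \<notin> grid m"
  shows "cell_mass k m p = 0"
proof -
  have "region \<inter> dyadic_round m -` {p} = {}"
    using assms unfolding grid_def by blast
  then show ?thesis
    by (simp add: cell_mass_def)
qed

lemma measure_Union_cells:
  assumes "A \<subseteq> grid m"
  shows "measure (\<mu> k) (\<Union>p\<in>A. region \<inter> dyadic_round m -` {p}) = sum (cell_mass k m) A"
  unfolding cell_mass_def using finite_subset[OF assms finite_grid]
  by (intro measure_finite_Union) (auto simp: emeasure_\<mu>_finite disjoint_family_on_def sets_\<mu>)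

lemma cell_mass_eq_sum_children:
  "cell_mass k m p = sum (cell_mass k (Suc m)) {p'\<in>grid (Suc m). dyadic_round m p' = p}"
proof -
  have "region \<inter> dyadic_round m -` {p}
      = (\<Union>p'\<in>{p'\<in>grid (Suc m). dyadic_round m p' = p}. region \<inter> dyadic_round (Suc m) -` {p'})"
  proof (intro equalityI subsetI)
    fix y assume "y \<in> region \<inter> dyadic_round m -` {p}"
    then show "y \<in> (\<Union>p'\<in>{p'\<in>grid (Suc m). dyadic_round m p' = p}. region \<inter> dyadic_round (Suc m) -` {p'})"
      unfolding grid_def using dyadic_round_dyadic_round_Suc[of m y] by auto
  next
    fix y assume "y \<in> (\<Union>p'\<in>{p'\<in>grid (Suc m). dyadic_round m p' = p}. region \<inter> dyadic_round (Suc m) -` {p'})"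
    then show "y \<in> region \<inter> dyadic_round m -` {p}"
      using dyadic_round_dyadic_round_Suc[of m y] by auto
  qed
  then show ?thesis
    using measure_Union_cells[of _ "Suc m" k] unfolding cell_mass_def by auto
qed

lemma sum_cell_mass_le: "sum (cell_mass k 0) (grid 0) \<le> L + inverse (Suc k)"
proof -
  have "region = (\<Union>p\<in>grid 0. region \<inter> dyadic_round 0 -` {p})"
    unfolding grid_def by blast
  then have "sum (cell_mass k 0) (grid 0) = measure (\<mu> k) region"
    using measure_Union_cells[of "grid 0" 0 k] by simp
  moreover have "ennreal (measure (\<mu> k) region) \<le> ennreal (L + inverse (Suc k))"
    using emeasure_eq_ennreal_measure[OF emeasure_\<mu>_finite] emeasure_space mass_\<mu>
    by (metis order_trans)
  moreover have "0 \<le> L + inverse (Suc k)"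
    using L_nonneg by simp
  ultimately show ?thesis
    by (simp del: ennreal_plus)
qed

lemma cell_mass_cover:
  assumes "x \<in> K"
  shows "1 \<le> sum (cell_mass k m) {p\<in>grid m. x - p \<in> thickening T (inverse (Suc k) + DIM('a) / 2^m)}"
proof -
  let ?d = "inverse (real (Suc k))"
  let ?A = "{p\<in>grid m. x - p \<in> thickening T (?d + DIM('a) / 2^m)}"
  have thickening_borel: "thickening T ?d \<in> sets borel"
    using closed_thickening[OF compact_imp_closed[OF compact_T]] by simp
  have "{y. x - y \<in> thickening T ?d} \<subseteq> (\<Union>p\<in>?A. region \<inter> dyadic_round m -` {p})"
  proof
    fix y assume y: "y \<in> {y. x - y \<in> thickening T ?d}"
    have "?d \<le> 1"
      by (simp add: field_simps)
    then have "y \<in> region"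
      using y thickening_mono[of ?d 1 T] in_region[OF assms] by blast
    moreover have "dist (x - y) (x - dyadic_round m y) \<le> DIM('a) / 2^m"
      using dist_dyadic_round_le[of m y] by (simp add: dist_norm norm_minus_commute)
    ultimately show "y \<in> (\<Union>p\<in>?A. region \<inter> dyadic_round m -` {p})"
      using y thickening_dist unfolding grid_def by blast
  qed
  then have "emeasure (\<mu> k) {y. x - y \<in> thickening T ?d}
      \<le> emeasure (\<mu> k) (\<Union>p\<in>?A. region \<inter> dyadic_round m -` {p})"
    by (intro emeasure_mono) (auto simp: sets_\<mu> finite_grid)
  moreover have "1 \<le> emeasure (\<mu> k) {y. x - y \<in> thickening T ?d}"
    using covers_\<mu>[of x k] assms nn_integral_indicator_reflect[OF sets_\<mu> thickening_borel] by simp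
  moreover have "emeasure (\<mu> k) (\<Union>p\<in>?A. region \<inter> dyadic_round m -` {p}) = ennreal (sum (cell_mass k m) ?A)"
    using emeasure_eq_ennreal_measure[OF emeasure_\<mu>_finite] measure_Union_cells[of ?A m k] by simp
  ultimately have "1 \<le> ennreal (sum (cell_mass k m) ?A)"
    by order
  then show ?thesis
    by simp
qed

lemma ex_subseq_cell_mass_convergent:
  "\<exists>r. strict_mono r \<and> (\<forall>m p. convergent (\<lambda>k. cell_mass (r k) m p))"
proof -
  have "countable (SIGMA m:UNIV. grid m)"
    by (intro countable_SIGMA) (auto intro: countable_finite finite_grid)
  moreover have "bounded (range (\<lambda>k. case_prod (cell_mass k) i))" for i
  proof -
    have "norm (case_prod (cell_mass k) i) \<le> L + 1" for k
      using cell_mass_nonneg cell_mass_le by (cases i) auto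
    then show ?thesis
      unfolding bounded_iff by blast
  qed
  ultimately obtain r where r: "strict_mono r"
    "\<And>i. i \<in> (SIGMA m:UNIV. grid m) \<Longrightarrow> convergent (\<lambda>k. case_prod (cell_mass (r k)) i)"
    by (rule diagonal_subseq_convergent[where f = "\<lambda>k. case_prod (cell_mass k)"]) blast
  have "convergent (\<lambda>k. cell_mass (r k) m p)" for m p
    using r(2)[of "(m, p)"] cell_mass_outside_grid[of p m] by (cases "p \<in> grid m") (auto simp: convergent_const)
  with r(1) show ?thesis
    by blast
qed

definition subseq :: "nat \<Rightarrow> nat" where
  "subseq = (SOME r. strict_mono r \<and> (\<forall>m p. convergent (\<lambda>k. cell_mass (r k) m p)))"

definition limit_mass :: "nat \<Rightarrow> 'a \<Rightarrow> real" where
  "limit_mass m p = lim (\<lambda>k. cell_mass (subseq k) m p)"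

lemma strict_mono_subseq: "strict_mono subseq"
  using someI_ex[OF ex_subseq_cell_mass_convergent] unfolding subseq_def by blast

lemma cell_mass_tendsto: "(\<lambda>k. cell_mass (subseq k) m p) \<longlonglongrightarrow> limit_mass m p"
  using someI_ex[OF ex_subseq_cell_mass_convergent]
  unfolding subseq_def[symmetric] limit_mass_def by (simp add: convergent_LIMSEQ_iff)

lemma limit_mass_nonneg: "0 \<le> limit_mass m p"
  by (rule LIMSEQ_le_const[OF cell_mass_tendsto]) (simp add: cell_mass_nonneg)

lemma limit_mass_eq_sum_children:
  "limit_mass m p = sum (limit_mass (Suc m)) {p'\<in>grid (Suc m). dyadic_round m p' = p}"
proof (rule LIMSEQ_unique[OF cell_mass_tendsto])
  show "(\<lambda>k. cell_mass (subseq k) m p) \<longlonglongrightarrow> sum (limit_mass (Suc m)) {p'\<in>grid (Suc m). dyadic_round m p' = p}"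
    unfolding cell_mass_eq_sum_children[of _ m] by (intro tendsto_sum cell_mass_tendsto)
qed

lemma sum_limit_mass_le: "sum (limit_mass 0) (grid 0) \<le> L"
proof (rule LIMSEQ_le)
  show "(\<lambda>k. sum (cell_mass (subseq k) 0) (grid 0)) \<longlonglongrightarrow> sum (limit_mass 0) (grid 0)"
    by (intro tendsto_sum cell_mass_tendsto)
  show "(\<lambda>k. L + inverse (real (Suc k))) \<longlonglongrightarrow> L"
    using tendsto_add[OF tendsto_const LIMSEQ_inverse_real_of_nat, of L] by simp
  have "sum (cell_mass (subseq k) 0) (grid 0) \<le> L + inverse (real (Suc k))" for k
  proof -
    have "inverse (real (Suc (subseq k))) \<le> inverse (real (Suc k))"
      using seq_suble[OF strict_mono_subseq, of k] by (intro le_imp_inverse_le) auto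
    then show ?thesis
      using sum_cell_mass_le[of "subseq k"] by linarith
  qed
  then show "\<exists>N. \<forall>k\<ge>N. sum (cell_mass (subseq k) 0) (grid 0) \<le> L + inverse (real (Suc k))"
    by blast
qed

text \<open>Since the grid is finite, a single index \<open>j\<close> discards, for all grid points at once, the
memberships in \<open>T + (DIM/2\<^sup>m + 1/(j+1))B\<close> that are lost in the limit.\<close>

lemma limit_mass_cover:
  assumes "x \<in> K"
  shows "1 \<le> sum (limit_mass m) {p\<in>grid m. x - p \<in> thickening T (DIM('a) / 2^m)}"
proof -
  define a where "a = DIM('a) / 2^m"
  define d where "d j = inverse (real (Suc j))" for j
  have "d \<longlonglongrightarrow> 0"
    unfolding d_def by (rule LIMSEQ_inverse_real_of_nat)
  have "\<forall>\<^sub>F j in sequentially. \<forall>p\<in>grid m. x - p \<in> thickening T (a + d j) \<longrightarrow> x - p \<in> thickening T a"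
  proof (rule eventually_ball_finite[OF finite_grid], rule ballI)
    fix p
    show "\<forall>\<^sub>F j in sequentially. x - p \<in> thickening T (a + d j) \<longrightarrow> x - p \<in> thickening T a"
      using eventually_not_in_thickening[OF compact_imp_closed[OF compact_T] _ \<open>d \<longlonglongrightarrow> 0\<close>, of "x - p" a]
      by (cases "x - p \<in> thickening T a") (auto elim: eventually_mono)
  qed
  then obtain j where j: "\<And>p. p \<in> grid m \<Longrightarrow> x - p \<in> thickening T (a + d j) \<Longrightarrow> x - p \<in> thickening T a"
    by (auto simp: eventually_sequentially)
  have "1 \<le> sum (cell_mass (subseq k) m) {p\<in>grid m. x - p \<in> thickening T a}" if "j \<le> k" for k
  proof -
    have "d (subseq k) \<le> d j"
      unfolding d_def using seq_suble[OF strict_mono_subseq, of k] that by (intro le_imp_inverse_le) auto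
    then have "{p\<in>grid m. x - p \<in> thickening T (d (subseq k) + a)} \<subseteq> {p\<in>grid m. x - p \<in> thickening T a}"
      using j thickening_mono[of "d (subseq k) + a" "a + d j" T] by auto
    then have "sum (cell_mass (subseq k) m) {p\<in>grid m. x - p \<in> thickening T (d (subseq k) + a)}
        \<le> sum (cell_mass (subseq k) m) {p\<in>grid m. x - p \<in> thickening T a}"
      by (intro sum_mono2) (auto simp: finite_grid cell_mass_nonneg)
    then show ?thesis
      using cell_mass_cover[OF assms, of "subseq k" m] by (simp add: a_def d_def)
  qed
  then show ?thesis
    unfolding a_def by (intro LIMSEQ_le_const[OF tendsto_sum]) (auto intro: cell_mass_tendsto)
qed

lemma limit_cover_exists:
  obtains M where "regular_borel_measure M" "\<And>x. indicator K x \<le> \<integral>\<^sup>+ y. indicator T (x - y) \<partial>M"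
    "emeasure M (space M) \<le> ennreal L"
proof -
  interpret weight_tree grid dyadic_round limit_mass "DIM('a)"
  proof
    show "limit_mass m p = sum (limit_mass (Suc m)) {p'\<in>grid (Suc m). dyadic_round m p' = p}" for m p
      by (rule limit_mass_eq_sum_children)
  qed (simp_all add: finite_grid dyadic_round_in_grid limit_mass_nonneg dist_dyadic_round_le)
  have closed_T: "closed T"
    using compact_T by (rule compact_imp_closed)
  have "indicator K x \<le> \<integral>\<^sup>+ y. indicator T (x - y) \<partial>tree_measure" for x
  proof (cases "x \<in> K")
    case True
    have closed_reflected: "closed {y. x - y \<in> T}"
      using continuous_closed_vimage[OF closed_T, of "\<lambda>y. x - y"] by (simp add: vimage_def)
    have "ennreal 1 \<le> emeasure tree_measure {y. x - y \<in> T}"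
      using limit_mass_cover[OF True] thickening_reflect[of x T]
      by (intro le_emeasure_tree_measure[OF closed_reflected]) (simp add: set_eq_iff)
    then show ?thesis
      using True nn_integral_indicator_reflect[OF sets_tree_measure borel_closed[OF closed_T]] by simp
  qed simp
  moreover have "emeasure tree_measure (space tree_measure) \<le> ennreal L"
    using emeasure_space_tree_measure sum_limit_mass_le by (simp add: ennreal_leI)
  moreover have "regular_borel_measure tree_measure"
    using emeasure_space_tree_measure by (intro regular_borel_measureI) auto
  ultimately show ?thesis
    using that by blast
qed

end

lemma frac_cover_number_le_SUP_thickening:
  fixes K T :: "'a::euclidean_space set"
  assumes "compact K" and "compact T"
  shows "frac_cover_number K T \<le> (SUP \<delta>\<in>{0<..}. frac_cover_number K (thickening T \<delta>))"
    (is "_ \<le> ?S")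
proof (cases "?S = \<infinity>")
  case False
  then obtain L where L: "?S = ennreal L" "0 \<le> L"
    by (cases ?S) auto
  have "\<exists>M. regular_borel_measure M
      \<and> (\<forall>x. indicator K x \<le> \<integral>\<^sup>+ y. indicator (thickening T (inverse (Suc k))) (x - y) \<partial>M)
      \<and> emeasure M (space M) \<le> ennreal (L + inverse (Suc k))" for k
  proof -
    have "frac_cover_number K (thickening T (inverse (Suc k))) \<le> ?S"
      by (intro SUP_upper) simp
    also have "\<dots> < ennreal (L + inverse (Suc k))"
      using L by (simp add: ennreal_less_iff)
    finally show ?thesis
      using frac_cover_number_lessD less_imp_le by blast
  qed
  then obtain \<mu> where \<mu>: "\<And>k. regular_borel_measure (\<mu> k)"
    "\<And>k x. indicator K x \<le> \<integral>\<^sup>+ y. indicator (thickening T (inverse (Suc k))) (x - y) \<partial>\<mu> k"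
    "\<And>k. emeasure (\<mu> k) (space (\<mu> k)) \<le> ennreal (L + inverse (Suc k))"
    by metis
  interpret near_covers K T \<mu> L
    using assms L(2) \<mu> by unfold_locales (auto simp: regular_borel_measure_def)
  obtain M where M: "regular_borel_measure M" "\<And>x. indicator K x \<le> \<integral>\<^sup>+ y. indicator T (x - y) \<partial>M"
    "emeasure M (space M) \<le> ennreal L"
    using limit_cover_exists by blast
  have "frac_cover_number K T \<le> emeasure M (space M)"
    using M(1,2) by (rule frac_cover_number_le)
  then show ?thesis
    using M(3) L(1) by order
qed (simp only: infinity_ennreal_def top_greatest)

lemma tendsto_at_right_0_SUP:
  fixes f :: "real \<Rightarrow> 'b::{complete_linorder, linorder_topology}"
  assumes "\<And>x y. 0 < x \<Longrightarrow> x \<le> y \<Longrightarrow> f y \<le> f x"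
  shows "(f \<longlongrightarrow> (SUP x\<in>{0<..}. f x)) (at_right 0)"
proof (rule order_tendstoI)
  fix a assume "a < (SUP x\<in>{0<..}. f x)"
  then obtain x0 where "0 < x0" "a < f x0"
    by (auto simp: less_SUP_iff)
  then show "eventually (\<lambda>x. a < f x) (at_right 0)"
    unfolding eventually_at_right_field using assms
    by (intro exI[of _ x0]) (auto intro: less_le_trans)
next
  fix a assume a: "(SUP x\<in>{0<..}. f x) < a"
  have "f x < a" if "0 < x" for x
    using a SUP_upper[of x "{0<..}" f] that by (simp add: le_less_trans)
  then show "eventually (\<lambda>x. f x < a) (at_right 0)"
    using eventually_at_right_less[of 0] by (auto elim: eventually_mono)
qed

theorem proposition2p4:
  fixes K T :: "'a::euclidean_space set"
  assumes "compact K" and "compact T" and "interior T \<noteq> {}"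
  shows "((\<lambda>\<delta>::real. frac_cover_number K {t + \<delta> *\<^sub>R b | t b. t \<in> T \<and> b \<in> cball 0 1})
           \<longlongrightarrow> frac_cover_number K T) (at_right 0)"
proof -
  let ?N = "\<lambda>\<delta>. frac_cover_number K (thickening T \<delta>)"
  have "(SUP \<delta>\<in>{0<..}. ?N \<delta>) = frac_cover_number K T"
  proof (rule antisym)
    show "(SUP \<delta>\<in>{0<..}. ?N \<delta>) \<le> frac_cover_number K T"
      by (intro SUP_least frac_cover_number_antimono subset_thickening) simp
    show "frac_cover_number K T \<le> (SUP \<delta>\<in>{0<..}. ?N \<delta>)"
      using assms(1,2) by (rule frac_cover_number_le_SUP_thickening)
  qed
  moreover have "(?N \<longlongrightarrow> (SUP \<delta>\<in>{0<..}. ?N \<delta>)) (at_right 0)"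
    by (intro tendsto_at_right_0_SUP frac_cover_number_antimono thickening_mono)
  moreover have "\<forall>\<^sub>F \<delta> in at_right 0.
      ?N \<delta> = frac_cover_number K {t + \<delta> *\<^sub>R b | t b. t \<in> T \<and> b \<in> cball 0 1}"
    using eventually_at_right_less[of "0::real"]
    by eventually_elim (simp only: Minkowski_cball_eq_thickening)
  ultimately show ?thesis
    using tendsto_cong by fastforce
qed

end
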